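(* Let $\mathcal D_{\mathrm{cost}}$ be a distribution on $\mathbb R_{\ge0}$ with mean $1$, let $n\ge1$, and let $x_1,\dots,x_n$ be i.i.d. from $\mathcal D_{\mathrm{cost}}$. Let $\Delta(x_1,\dots,x_n)$ be the minimum number of the $x_i$ that must be removed so that the sum of the remaining ones is at most $n$. Then $$\mathbb E[\Delta(x_1,\dots,x_n)]\le5\sqrt n.$$ *)

theory Defs
  imports "HOL-Probability.Probability"
begin

text \<open>Minimum number of the values x 0, ..., x (n-1) that must be removed so that
  the sum of the remaining ones is at most n. (Removing all of them always works.)\<close>
definition removal_number :: "nat \<Rightarrow> (nat \<Rightarrow> real) \<Rightarrow> nat" where
  "removal_number n x =
     (LEAST k. \<exists>S. S \<subseteq> {..<n} \<and> card S = k \<and> (\<Sum>i\<in>{..<n} - S. x i) \<le> real n)"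

end

theory Submission
  imports Defs
begin

text \<open>Keeping the n - k smallest values works as soon as \<open>\<Sum>i<n. min (x i) q - 1 \<le> k * q\<close>
  for every threshold q > 0, so the removal number is at most one more than the least such k.
  For q between \<open>4 ^ (m - 1)\<close> and \<open>4 ^ m\<close> the left-hand side is at most the positive part of
  the centred sum \<open>Z m\<close> of the values capped at \<open>4 ^ m\<close>; thresholds above \<open>4 ^ n\<close> are
  handled by the mean of the values capped at \<open>4 ^ n\<close>. A nonnegative variable capped at Q with
  mean at most 1 has variance at most Q, so the positive part of \<open>Z m\<close> has expectation at most
  \<open>sqrt n * 2 ^ m / 2\<close>. Weighting scale m by \<open>4 / 4 ^ m\<close>, these bounds form a geometric
  series with sum at most \<open>2 * sqrt n\<close>.\<close>

lemma removal_number_le_n: "removal_number n x \<le> n"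
  unfolding removal_number_def by (rule Least_le) (rule exI[of _ "{..<n}"], simp)

lemma removal_number_le_card:
  assumes "S \<subseteq> {..<n}" and "(\<Sum>i\<in>{..<n} - S. x i) \<le> real n"
  shows "removal_number n x \<le> card S"
  unfolding removal_number_def using assms by (intro Least_le) blast

lemma exists_top_subset:
  fixes x :: "'a \<Rightarrow> 'b::linorder"
  assumes "finite I" and "k \<le> card I"
  shows "\<exists>S q. S \<subseteq> I \<and> card S = k \<and> (\<forall>i\<in>S. q \<le> x i) \<and> (\<forall>i\<in>I - S. x i \<le> q)"
  using assms(2)
proof (induction k)
  case 0
  show ?case
  proof (cases "I = {}")
    case False
    then show ?thesis using assms(1) by (intro exI[of _ "{}"] exI[of _ "Max (x ` I)"]) auto
  qed auto
next
  case (Suc k)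
  then obtain S q where S: "S \<subseteq> I" "card S = k" "\<forall>i\<in>S. q \<le> x i" "\<forall>i\<in>I - S. x i \<le> q"
    by auto
  have "finite S" using S(1) assms(1) by (rule finite_subset)
  have "I - S \<noteq> {}"
  proof
    assume "I - S = {}"
    then have "card I \<le> card S" using \<open>finite S\<close> by (intro card_mono) auto
    then show False using Suc.prems S(2) by simp
  qed
  then obtain j where j: "j \<in> I - S" "x j = Max (x ` (I - S))"
    using Max_in[of "x ` (I - S)"] assms(1)
    by (metis (no_types, lifting) finite_Diff finite_imageI image_iff image_is_empty)
  then have j_max: "\<forall>i\<in>I - S. x i \<le> x j" using assms(1) by simp
  have "\<forall>i\<in>insert j S. x j \<le> x i" using S(3,4) j(1) by (auto intro: order.trans)
  moreover have "card (insert j S) = Suc k" using \<open>finite S\<close> S(2) j(1) by simp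
  ultimately show ?case using S(1) j(1) j_max
    by (intro exI[of _ "insert j S"] exI[of _ "x j"]) auto
qed

lemma removal_number_le_of_truncated_sums:
  fixes x :: "nat \<Rightarrow> real"
  assumes H: "\<And>q. q > 0 \<Longrightarrow> (\<Sum>i<n. min (x i) q - 1) \<le> real k * q"
  shows "removal_number n x \<le> k"
proof (cases "k \<le> n")
  case False
  then show ?thesis using removal_number_le_n[of n x] by simp
next
  case True
  then obtain S q where S: "S \<subseteq> {..<n}" "card S = k"
    "\<forall>i\<in>S. q \<le> x i" "\<forall>i\<in>{..<n} - S. x i \<le> q"
    using exists_top_subset[of "{..<n}" k x] by auto
  have "(\<Sum>i\<in>{..<n} - S. x i) \<le> real n"
  proof (cases "q > 0")
    case True
    have "(\<Sum>i<n. min (x i) q) = (\<Sum>i\<in>S. min (x i) q) + (\<Sum>i\<in>{..<n} - S. min (x i) q)"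
      using S(1) by (metis add.commute finite_lessThan sum.subset_diff)
    also have "\<dots> = real k * q + (\<Sum>i\<in>{..<n} - S. x i)"
      using S(2-4) by (simp add: min_absorb2)
    finally show ?thesis using H[OF True] by (simp add: sum_subtractf)
  next
    case False
    then have "(\<Sum>i\<in>{..<n} - S. x i) \<le> 0" using S(4) by (intro sum_nonpos) force
    then show ?thesis by simp
  qed
  then show ?thesis using removal_number_le_card[OF S(1)] S(2) by simp
qed

lemma exists_power_bracket:
  fixes b q :: real
  assumes "1 \<le> M" and "1 \<le> q" and "q \<le> b ^ M"
  shows "\<exists>m\<in>{1..M}. b ^ (m - 1) \<le> q \<and> q \<le> b ^ m"
  using assms
proof (induction M rule: nat_induct_at_least)
  case (Suc M)
  show ?case
  proof (cases "q \<le> b ^ M")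
    case True
    with Suc.IH Suc.prems show ?thesis by fastforce
  next
    case False
    then show ?thesis using Suc.prems by (intro bexI[of _ "Suc M"]) auto
  qed
qed auto

definition capped :: "real \<Rightarrow> real \<Rightarrow> real" where
  "capped Q y = min (max y 0) Q"

lemma capped_nonneg: "Q \<ge> 0 \<Longrightarrow> capped Q y \<ge> 0"
  and capped_le: "capped Q y \<le> Q"
  by (auto simp: capped_def)

lemma borel_measurable_capped [measurable]: "capped Q \<in> borel_measurable borel"
  unfolding capped_def by measurable

lemma min_minus_one_le_capped_scaled:
  fixes y q Q :: real
  assumes "0 < Q" and "Q < q"
  shows "min y q - 1 \<le> capped Q y / Q * q"
proof (cases "0 < y \<and> y \<le> Q")
  case True
  then have "y \<le> y / Q * q" using assms by (simp add: field_simps mult_left_mono)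
  then show ?thesis using True by (simp add: capped_def)
qed (use assms in \<open>auto simp: capped_def\<close>)

text \<open>The m-th summand accounts for the thresholds in \<open>[4 ^ (m - 1), 4 ^ m]\<close>, the last sum
  for the thresholds above \<open>4 ^ M\<close>.\<close>
definition excess_bound :: "nat \<Rightarrow> nat \<Rightarrow> (real \<Rightarrow> real) \<Rightarrow> (nat \<Rightarrow> real) \<Rightarrow> real" where
  "excess_bound n M c x =
     (\<Sum>m\<in>{1..M}. 4 / 4 ^ m * max 0 (\<Sum>i<n. capped (4 ^ m) (x i) - c (4 ^ m))) +
     (\<Sum>i<n. capped (4 ^ M) (x i) / 4 ^ M)"

lemma excess_bound_nonneg: "excess_bound n M c x \<ge> 0"
  unfolding excess_bound_def by (intro add_nonneg_nonneg sum_nonneg) (auto simp: capped_nonneg)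

lemma truncated_sum_le_excess_bound:
  fixes x :: "nat \<Rightarrow> real" and c :: "real \<Rightarrow> real"
  assumes c_le: "\<And>Q. c Q \<le> 1" and M: "M \<ge> 1" and q: "q > 0"
  shows "(\<Sum>i<n. min (x i) q - 1) \<le> excess_bound n M c x * q"
proof -
  define T where "T m = 4 / 4 ^ m * max 0 (\<Sum>i<n. capped (4 ^ m) (x i) - c (4 ^ m))" for m
  have T_nonneg: "T m \<ge> 0" for m by (simp add: T_def)
  have T_le: "T m \<le> excess_bound n M c x" if "m \<in> {1..M}" for m
  proof -
    have "T m \<le> (\<Sum>m\<in>{1..M}. T m)" using that T_nonneg by (intro member_le_sum) auto
    also have "\<dots> \<le> excess_bound n M c x"
      unfolding excess_bound_def T_def by (simp add: sum_nonneg capped_nonneg)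
    finally show ?thesis .
  qed
  consider "q < 1" | "1 \<le> q" "q \<le> 4 ^ M" | "4 ^ M < q" by linarith
  then show ?thesis
  proof cases
    case 1
    have "(\<Sum>i<n. min (x i) q - 1) \<le> 0" using 1 by (intro sum_nonpos) auto
    also have "\<dots> \<le> excess_bound n M c x * q" using excess_bound_nonneg q by simp
    finally show ?thesis .
  next
    case 2
    then obtain m where m: "m \<in> {1..M}" "4 ^ (m - 1) \<le> q" "q \<le> (4::real) ^ m"
      using exists_power_bracket[OF M] by blast
    have "(\<Sum>i<n. min (x i) q - 1) \<le> (\<Sum>i<n. capped (4 ^ m) (x i) - c (4 ^ m))"
      using c_le[of "4 ^ m"] m(3) by (intro sum_mono) (auto simp: capped_def)
    also have "\<dots> \<le> T m * (4 ^ m / 4)" by (simp add: T_def)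
    also have "\<dots> \<le> T m * q"
    proof -
      have "(4::real) ^ m = 4 * 4 ^ (m - 1)" using m(1) by (cases m) auto
      then show ?thesis using m(2) T_nonneg by (intro mult_left_mono) auto
    qed
    also have "\<dots> \<le> excess_bound n M c x * q" using T_le[OF m(1)] q by simp
    finally show ?thesis .
  next
    case 3
    have "min (x i) q - 1 \<le> capped (4 ^ M) (x i) / 4 ^ M * q" for i
      using 3 by (intro min_minus_one_le_capped_scaled) auto
    then have "(\<Sum>i<n. min (x i) q - 1) \<le> (\<Sum>i<n. capped (4 ^ M) (x i) / 4 ^ M) * q"
      by (simp add: sum_mono sum_distrib_right)
    also have "\<dots> \<le> excess_bound n M c x * q"
      using q unfolding excess_bound_def by (simp add: sum_nonneg)
    finally show ?thesis .
  qed
qed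

lemma removal_number_le_excess_bound:
  fixes x :: "nat \<Rightarrow> real" and c :: "real \<Rightarrow> real"
  assumes "\<And>Q. c Q \<le> 1" and "M \<ge> 1"
  shows "real (removal_number n x) \<le> 1 + excess_bound n M c x"
proof -
  define k where "k = nat \<lceil>excess_bound n M c x\<rceil>"
  have "excess_bound n M c x \<le> real k" unfolding k_def by linarith
  then have "removal_number n x \<le> k"
    using truncated_sum_le_excess_bound[OF assms]
    by (intro removal_number_le_of_truncated_sums) (meson mult_right_mono order.trans less_imp_le)
  then have "real (removal_number n x) \<le> real k" by simp
  also have "\<dots> \<le> 1 + excess_bound n M c x"
    unfolding k_def using excess_bound_nonneg[of n M c x] by linarith
  finally show ?thesis .
qed

lemma max_0_le_quadratic:
  fixes z l :: real
  assumes "l > 0"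
  shows "max 0 z \<le> z\<^sup>2 / (4 * l) + l / 4 + z / 2"
proof -
  have "4 * l * max 0 z \<le> (z + l)\<^sup>2"
  proof (cases "z \<ge> 0")
    case True
    have "(z + l)\<^sup>2 = (z - l)\<^sup>2 + 4 * l * z" by (simp add: power2_eq_square algebra_simps)
    then show ?thesis using True by simp
  qed simp
  also have "(z + l)\<^sup>2 = 4 * l * (z\<^sup>2 / (4 * l) + l / 4 + z / 2)"
    using assms by (simp add: field_simps power2_eq_square)
  finally show ?thesis using assms by simp
qed

locale iid_sample =
  fixes D :: "'a measure" and n :: nat
  assumes prob_space_D: "prob_space D"
begin

abbreviation sample_space :: "(nat \<Rightarrow> 'a) measure" where
  "sample_space \<equiv> PiM {..<n} (\<lambda>_. D)"

sublocale D: prob_space D by (rule prob_space_D)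

sublocale P: prob_space sample_space by (rule prob_space_PiM) (rule prob_space_D)

lemma measurable_component:
  "h \<in> borel_measurable D \<Longrightarrow> i < n \<Longrightarrow> (\<lambda>x. h (x i)) \<in> borel_measurable sample_space"
  by (rule measurable_compose[OF measurable_component_singleton]) auto

lemma integral_component:
  fixes h :: "'a \<Rightarrow> real"
  assumes "h \<in> borel_measurable D" and "i < n"
  shows "(\<integral>x. h (x i) \<partial>sample_space) = (\<integral>y. h y \<partial>D)"
proof -
  have "(\<integral>x. h (x i) \<partial>sample_space) = integral\<^sup>L (distr sample_space D (\<lambda>x. x i)) h"
    using assms by (intro integral_distr[symmetric]) auto
  also have "distr sample_space D (\<lambda>x. x i) = D"
    using assms(2) by (intro distr_PiM_component) (auto simp: prob_space_D)
  finally show ?thesis .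
qed

lemma integrable_component:
  fixes h :: "'a \<Rightarrow> real"
  assumes "h \<in> borel_measurable D" and "\<And>y. \<bar>h y\<bar> \<le> K" and "i < n"
  shows "integrable sample_space (\<lambda>x. h (x i))"
  using assms by (intro P.integrable_const_bound[where B = K] measurable_component) auto

lemma integral_component_mult:
  fixes f g :: "'a \<Rightarrow> real"
  assumes f: "f \<in> borel_measurable D" "\<And>y. \<bar>f y\<bar> \<le> K"
    and g: "g \<in> borel_measurable D" "\<And>y. \<bar>g y\<bar> \<le> K"
    and ij: "i < n" "j < n" "i \<noteq> j"
  shows "(\<integral>x. f (x i) * g (x j) \<partial>sample_space) = (\<integral>y. f y \<partial>D) * (\<integral>y. g y \<partial>D)"
proof -
  interpret product_sigma_finite "\<lambda>_. D"
    unfolding product_sigma_finite_def by (simp add: D.sigma_finite_measure_axioms)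
  define F where "F k = (if k = i then f else if k = j then g else (\<lambda>_. 1))" for k
  have F_integrable: "integrable D (F k)" for k
    using f g by (auto simp: F_def intro!: D.integrable_const_bound[where B = K])
  have split: "{..<n} = insert i (insert j ({..<n} - {i, j}))" using ij by auto
  have "(\<integral>x. f (x i) * g (x j) \<partial>sample_space) = (\<integral>x. (\<Prod>k<n. F k (x k)) \<partial>sample_space)"
    using ij by (subst split) (simp add: F_def prod.neutral)
  also have "\<dots> = (\<Prod>k<n. integral\<^sup>L D (F k))"
    by (rule product_integral_prod) (auto simp: F_integrable)
  also have "\<dots> = (\<integral>y. f y \<partial>D) * (\<integral>y. g y \<partial>D)"
    using ij by (subst split) (simp add: F_def prod.neutral D.prob_space)
  finally show ?thesis .
qed

context
  fixes h :: "'a \<Rightarrow> real" and K :: real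
  assumes h_measurable: "h \<in> borel_measurable D" and h_bounded: "\<And>y. \<bar>h y\<bar> \<le> K"
    and h_centered: "(\<integral>y. h y \<partial>D) = 0"
begin

lemma integrable_sum_components: "integrable sample_space (\<lambda>x. \<Sum>i<n. h (x i))"
  using h_measurable h_bounded by (intro Bochner_Integration.integrable_sum integrable_component) auto

lemma integral_sum_components: "(\<integral>x. (\<Sum>i<n. h (x i)) \<partial>sample_space) = 0"
  using integrable_component[OF h_measurable h_bounded]
  by (simp add: Bochner_Integration.integral_sum integral_component[OF h_measurable] h_centered)

lemma integrable_product_components:
  assumes "i < n" and "j < n"
  shows "integrable sample_space (\<lambda>x. h (x i) * h (x j))"
proof (intro P.integrable_const_bound[where B = "K * K"] AE_I2)
  fix x
  have "0 \<le> K" using h_bounded[of undefined] by linarith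
  then show "norm (h (x i) * h (x j)) \<le> K * K"
    using h_bounded by (simp add: abs_mult mult_mono)
qed (use assms h_measurable in \<open>auto intro!: borel_measurable_times measurable_component\<close>)

lemma integrable_sum_components_sq: "integrable sample_space (\<lambda>x. (\<Sum>i<n. h (x i))\<^sup>2)"
  unfolding power2_eq_square sum_product
  by (intro Bochner_Integration.integrable_sum integrable_product_components) auto

lemma integral_sum_components_sq:
  "(\<integral>x. (\<Sum>i<n. h (x i))\<^sup>2 \<partial>sample_space) = real n * (\<integral>y. (h y)\<^sup>2 \<partial>D)"
proof -
  have "(\<integral>x. (\<Sum>i<n. h (x i))\<^sup>2 \<partial>sample_space) = (\<Sum>i<n. \<Sum>j<n. \<integral>x. h (x i) * h (x j) \<partial>sample_space)"
    unfolding power2_eq_square sum_product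
    by (subst Bochner_Integration.integral_sum)
       (auto intro!: sum.cong Bochner_Integration.integral_sum Bochner_Integration.integrable_sum
         integrable_product_components)
  also have "\<dots> = (\<Sum>i<n. \<Sum>j<n. if j = i then (\<integral>y. (h y)\<^sup>2 \<partial>D) else 0)"
  proof (intro sum.cong refl)
    fix i j assume "i \<in> {..<n}" "j \<in> {..<n}"
    then show "(\<integral>x. h (x i) * h (x j) \<partial>sample_space) = (if j = i then (\<integral>y. (h y)\<^sup>2 \<partial>D) else 0)"
      using integral_component[of "\<lambda>y. (h y)\<^sup>2" i] h_measurable
        integral_component_mult[OF h_measurable h_bounded h_measurable h_bounded, of i j]
      by (auto simp: power2_eq_square h_centered)
  qed
  also have "\<dots> = real n * (\<integral>y. (h y)\<^sup>2 \<partial>D)" by simp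
  finally show ?thesis .
qed

text \<open>Integrating \<open>max_0_le_quadratic\<close>, the linear term vanishes because h is centred.\<close>
lemma integral_pos_part_sum_components_le:
  assumes V: "(\<integral>y. (h y)\<^sup>2 \<partial>D) \<le> V" and l: "l > 0"
  shows "integrable sample_space (\<lambda>x. max 0 (\<Sum>i<n. h (x i)))"
    and "(\<integral>x. max 0 (\<Sum>i<n. h (x i)) \<partial>sample_space) \<le> real n * V / (4 * l) + l / 4"
proof -
  show "integrable sample_space (\<lambda>x. max 0 (\<Sum>i<n. h (x i)))"
    using integrable_sum_components by auto
  have "(\<integral>x. max 0 (\<Sum>i<n. h (x i)) \<partial>sample_space) \<le>
      (\<integral>x. (\<Sum>i<n. h (x i))\<^sup>2 / (4 * l) + l / 4 + (\<Sum>i<n. h (x i)) / 2 \<partial>sample_space)"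
    using integrable_sum_components integrable_sum_components_sq
    by (intro integral_mono max_0_le_quadratic l) auto
  also have "\<dots> = (\<integral>x. (\<Sum>i<n. h (x i))\<^sup>2 \<partial>sample_space) / (4 * l) + l / 4"
    using integrable_sum_components integrable_sum_components_sq
    by (simp add: integral_sum_components P.prob_space)
  also have "\<dots> \<le> real n * V / (4 * l) + l / 4"
    using V l by (simp add: integral_sum_components_sq divide_right_mono mult_left_mono)
  finally show "(\<integral>x. max 0 (\<Sum>i<n. h (x i)) \<partial>sample_space) \<le> real n * V / (4 * l) + l / 4" .
qed

end

end

lemma sum_power_half: "(\<Sum>m\<in>{1..M}. (1 / 2 :: real) ^ m) = 1 - (1 / 2) ^ M"
  by (induction M) (auto simp: atLeastAtMostSuc_conv field_simps)

locale cost_sample = iid_sample D n for D :: "real measure" and n :: nat +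
  assumes sets_D: "sets D = sets borel"
    and nonneg: "AE y in D. y \<ge> 0"
    and integrable_id: "integrable D (\<lambda>y. y)"
    and mean_one: "(\<integral>y. y \<partial>D) = 1"
begin

definition capped_mean :: "real \<Rightarrow> real" where
  "capped_mean Q = (\<integral>y. capped Q y \<partial>D)"

lemma measurable_capped: "capped Q \<in> borel_measurable D"
  by (subst measurable_cong_sets[OF sets_D refl]) simp

lemma integrable_capped: "integrable D (capped Q)"
  by (intro D.integrable_const_bound[where B = "\<bar>Q\<bar>"] measurable_capped) (auto simp: capped_def)

lemma capped_mean_nonneg: "Q \<ge> 0 \<Longrightarrow> capped_mean Q \<ge> 0"
  by (simp add: capped_mean_def capped_nonneg)

lemma capped_mean_le_1: "capped_mean Q \<le> 1"
proof -
  have "capped_mean Q \<le> (\<integral>y. y \<partial>D)" unfolding capped_mean_def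
    using nonneg by (intro integral_mono_AE integrable_capped integrable_id) (auto simp: capped_def)
  then show ?thesis using mean_one by simp
qed

lemma integral_capped_centered_sq_le:
  assumes "Q \<ge> 0"
  shows "(\<integral>y. (capped Q y - capped_mean Q)\<^sup>2 \<partial>D) \<le> Q"
proof -
  have integrable_sq: "integrable D (\<lambda>y. (capped Q y)\<^sup>2)"
  proof (intro D.integrable_const_bound[where B = "Q\<^sup>2"] AE_I2)
    fix y
    show "norm ((capped Q y)\<^sup>2) \<le> Q\<^sup>2"
      using assms by (simp add: capped_nonneg capped_le power_mono)
  qed (use measurable_capped in measurable)
  have "(\<integral>y. (capped Q y - capped_mean Q)\<^sup>2 \<partial>D) \<le> (\<integral>y. (capped Q y)\<^sup>2 \<partial>D)"
    using D.variance_eq[OF integrable_capped integrable_sq] by (simp add: capped_mean_def)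
  also have "\<dots> \<le> (\<integral>y. Q * capped Q y \<partial>D)"
    using assms integrable_sq integrable_capped
    by (intro integral_mono) (auto simp: power2_eq_square capped_nonneg capped_le mult_right_mono)
  also have "\<dots> \<le> Q"
    using assms capped_mean_le_1[of Q] by (simp add: capped_mean_def mult_left_le)
  finally show ?thesis .
qed

lemma integral_excess_term_le:
  assumes "n \<ge> 1"
  defines "Z m x \<equiv> max 0 (\<Sum>i<n. capped (4 ^ m) (x i) - capped_mean (4 ^ m))"
  shows "integrable sample_space (Z m)"
    and "(\<integral>x. 4 / 4 ^ m * Z m x \<partial>sample_space) \<le> 2 * sqrt n / 2 ^ m"
proof -
  define h where "h y = capped (4 ^ m) y - capped_mean (4 ^ m)" for y
  \<comment> \<open>This l balances the two terms of the bound \<open>n V / (4 l) + l / 4\<close> with \<open>V = 4 ^ m\<close>.\<close>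
  define l where "l = sqrt n * 2 ^ m"
  have l: "l > 0" using assms(1) by (simp add: l_def)
  have h_bounded: "\<bar>h y\<bar> \<le> 4 ^ m + 1" for y
    using capped_mean_le_1[of "4 ^ m"] capped_mean_nonneg[of "4 ^ m"]
      capped_nonneg[of "4 ^ m" y] capped_le[of "4 ^ m" y]
    by (auto simp: h_def abs_le_iff)
  have h_centered: "(\<integral>y. h y \<partial>D) = 0"
    using integrable_capped by (simp add: h_def capped_mean_def D.prob_space)
  have h_measurable: "h \<in> borel_measurable D"
    unfolding h_def by (intro borel_measurable_diff measurable_capped borel_measurable_const)
  have h_variance: "(\<integral>y. (h y)\<^sup>2 \<partial>D) \<le> 4 ^ m"
    unfolding h_def by (rule integral_capped_centered_sq_le) simp
  note pos_part = integral_pos_part_sum_components_le[OF h_measurable h_bounded h_centered h_variance l]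
  have Z_eq: "Z m = (\<lambda>x. max 0 (\<Sum>i<n. h (x i)))" unfolding Z_def h_def by simp
  show "integrable sample_space (Z m)"
    unfolding Z_eq by (rule pos_part(1))
  have "(\<integral>x. Z m x \<partial>sample_space) \<le> real n * 4 ^ m / (4 * l) + l / 4"
    unfolding Z_eq by (rule pos_part(2))
  also have "\<dots> = sqrt n * 2 ^ m / 2"
  proof -
    have "real n * 4 ^ m = l * l"
      by (simp add: l_def algebra_simps flip: power_mult_distrib)
    then show ?thesis using l by (simp add: l_def)
  qed
  finally have integral_Z: "(\<integral>x. Z m x \<partial>sample_space) \<le> sqrt n * 2 ^ m / 2" .
  have "(\<integral>x. 4 / 4 ^ m * Z m x \<partial>sample_space) = 4 / 4 ^ m * (\<integral>x. Z m x \<partial>sample_space)"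
    by simp
  also have "\<dots> \<le> 4 / 4 ^ m * (sqrt n * 2 ^ m / 2)"
    using integral_Z by (intro mult_left_mono) auto
  also have "\<dots> = 2 * sqrt n / 2 ^ m" by (simp add: field_simps flip: power_mult_distrib)
  finally show "(\<integral>x. 4 / 4 ^ m * Z m x \<partial>sample_space) \<le> 2 * sqrt n / 2 ^ m" .
qed

lemma integral_capped_tail_le:
  assumes "Q > 0"
  shows "integrable sample_space (\<lambda>x. \<Sum>i<n. capped Q (x i) / Q)"
    and "(\<integral>x. (\<Sum>i<n. capped Q (x i) / Q) \<partial>sample_space) \<le> n / Q"
proof -
  have integrable: "integrable sample_space (\<lambda>x. capped Q (x i))" if "i < n" for i
    using integrable_component[OF measurable_capped _ that, of Q "\<bar>Q\<bar>"] by (simp add: capped_def)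
  then show "integrable sample_space (\<lambda>x. \<Sum>i<n. capped Q (x i) / Q)" by auto
  have "(\<integral>x. (\<Sum>i<n. capped Q (x i) / Q) \<partial>sample_space) = (\<Sum>i<n. capped_mean Q / Q)"
    using integrable integral_component[OF measurable_capped]
    by (simp add: Bochner_Integration.integral_sum capped_mean_def)
  also have "\<dots> \<le> (\<Sum>i<n. 1 / Q)"
    using capped_mean_le_1[of Q] assms by (intro sum_mono divide_right_mono) auto
  finally show "(\<integral>x. (\<Sum>i<n. capped Q (x i) / Q) \<partial>sample_space) \<le> n / Q" by simp
qed

lemma integral_excess_bound_le:
  assumes "n \<ge> 1"
  shows "integrable sample_space (excess_bound n n capped_mean)"
    and "(\<integral>x. excess_bound n n capped_mean x \<partial>sample_space) \<le> 2 * sqrt n + 1"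
proof -
  note excess_term = integral_excess_term_le[OF assms]
  note tail = integral_capped_tail_le[of "4 ^ n"]
  have excess_terms_integrable: "integrable sample_space
      (\<lambda>x. 4 / 4 ^ m * max 0 (\<Sum>i<n. capped (4 ^ m) (x i) - capped_mean (4 ^ m)))" for m
    using excess_term(1) by (rule Bochner_Integration.integrable_mult_right)
  show "integrable sample_space (excess_bound n n capped_mean)"
    unfolding excess_bound_def using excess_terms_integrable tail(1) by auto
  have "(\<integral>x. excess_bound n n capped_mean x \<partial>sample_space) =
      (\<Sum>m\<in>{1..n}. \<integral>x. 4 / 4 ^ m * max 0 (\<Sum>i<n. capped (4 ^ m) (x i) - capped_mean (4 ^ m))
        \<partial>sample_space) + (\<integral>x. (\<Sum>i<n. capped (4 ^ n) (x i) / 4 ^ n) \<partial>sample_space)"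
    unfolding excess_bound_def using excess_terms_integrable tail(1)
    by (simp add: Bochner_Integration.integral_add Bochner_Integration.integral_sum)
  also have "\<dots> \<le> (\<Sum>m\<in>{1..n}. 2 * sqrt n * (1 / 2) ^ m) + n / 4 ^ n"
    using excess_term(2) tail(2) by (intro add_mono sum_mono) (auto simp: power_one_over)
  also have "\<dots> \<le> 2 * sqrt n + 1"
  proof -
    have "(\<Sum>m\<in>{1..n}. 2 * sqrt n * (1 / 2) ^ m) = 2 * sqrt n * (1 - (1 / 2) ^ n)"
      by (simp only: sum_power_half flip: sum_distrib_left)
    also have "\<dots> \<le> 2 * sqrt n" by (simp add: mult_left_le)
    moreover have "n \<le> 4 ^ n" using less_exp[of n] power_mono[of "2::nat" 4 n] by linarith
    then have "real n / 4 ^ n \<le> 1" by (simp add: field_simps)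
    ultimately show ?thesis by linarith
  qed
  finally show "(\<integral>x. excess_bound n n capped_mean x \<partial>sample_space) \<le> 2 * sqrt n + 1" .
qed

end

theorem mainTheorem14:
  fixes D :: "real measure" and n :: nat
  assumes "prob_space D"
    and "sets D = sets borel"
    and "AE x in D. x \<ge> 0"
    and "integrable D (\<lambda>x. x)"
    and "integral\<^sup>L D (\<lambda>x. x) = 1"
    and "n \<ge> 1"
  shows "(\<integral>x. real (removal_number n x) \<partial>(PiM {..<n} (\<lambda>_. D))) \<le> 5 * sqrt (real n)"
proof -
  interpret cost_sample D n
    using assms(1-5) by (intro cost_sample.intro iid_sample.intro cost_sample_axioms.intro)
  note excess = integral_excess_bound_le[OF assms(6)]
  have "1 \<le> sqrt n" using assms(6) by simp
  have pointwise: "real (removal_number n x) \<le> 1 + excess_bound n n capped_mean x" for x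
    using capped_mean_le_1 assms(6) by (intro removal_number_le_excess_bound)
  have "(\<integral>x. real (removal_number n x) \<partial>sample_space) \<le>
      (\<integral>x. 1 + excess_bound n n capped_mean x \<partial>sample_space)"
  proof (cases "integrable sample_space (\<lambda>x. real (removal_number n x))")
    case True
    then show ?thesis using excess(1) pointwise by (intro integral_mono) auto
  next
    case False
    then show ?thesis using excess(1) excess_bound_nonneg
      by (simp add: not_integrable_integral_eq add_nonneg_nonneg integral_nonneg)
  qed
  also have "\<dots> \<le> 2 + 2 * sqrt n" using excess by (simp add: P.prob_space)
  also have "\<dots> \<le> 5 * sqrt n" using \<open>1 \<le> sqrt n\<close> by linarith
  finally show ?thesis .
qed

end
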